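(* Let $\alpha<0$ and $U(x)=-x^\alpha$ on $(0,\infty)$. Let $\pi_t$ be a trading strategy such that $|\mathbb{E}U(V_t^\pi)|\le Ke^{-ct}$ for all sufficiently large $t$, for some constants $c,K>0$. Then $\pi_t$ generates an asymptotic exponential arbitrage with geometrically decaying probability of failure, i.e. there are $b>0$, $c'>0$ with $\mathbb{P}(V_t^\pi\ge e^{bt})\ge1-e^{-c't}$ for all sufficiently large $t$.
   Context: Setting: $X_t$ is a real-valued process on a filtered probability space with filtration $\mathcal{F}_t=\sigma(X_s,s\le t)$, $S_t=e^{X_t}$. A trading strategy is a predictable $[0,1]$-valued process $(\pi_t)_{t\ge1}$; its wealth is $V_0^\pi=V_0>0$, $V_t^\pi=V_{t-1}^\pi((1-\pi_t)+\pi_tS_t/S_{t-1})$ (so $V_t^\pi>0$). *)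

theory Defs
  imports "HOL-Probability.Probability"
begin

definition nat_filtration :: "'a measure \<Rightarrow> (nat \<Rightarrow> 'a \<Rightarrow> real) \<Rightarrow> nat \<Rightarrow> 'a measure" where
  "nat_filtration M X t =
     sigma (space M) {X s -` A \<inter> space M | s A. s \<le> t \<and> A \<in> sets (borel :: real measure)}"

definition price :: "(nat \<Rightarrow> 'a \<Rightarrow> real) \<Rightarrow> nat \<Rightarrow> 'a \<Rightarrow> real" where
  "price X t \<omega> = exp (X t \<omega>)"

primrec wealth :: "real \<Rightarrow> (nat \<Rightarrow> 'a \<Rightarrow> real) \<Rightarrow> (nat \<Rightarrow> 'a \<Rightarrow> real) \<Rightarrow> nat \<Rightarrow> 'a \<Rightarrow> real" where
  "wealth V0 X \<pi> 0 \<omega> = V0"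
| "wealth V0 X \<pi> (Suc t) \<omega> = wealth V0 X \<pi> t \<omega> *
     ((1 - \<pi> (Suc t) \<omega>) + \<pi> (Suc t) \<omega> * price X (Suc t) \<omega> / price X t \<omega>)"

definition trading_strategy :: "'a measure \<Rightarrow> (nat \<Rightarrow> 'a \<Rightarrow> real) \<Rightarrow> (nat \<Rightarrow> 'a \<Rightarrow> real) \<Rightarrow> bool" where
  "trading_strategy M X \<pi> \<longleftrightarrow>
     (\<forall>t. \<pi> (Suc t) \<in> borel_measurable (nat_filtration M X t)) \<and>
     (\<forall>t\<ge>1. \<forall>\<omega>\<in>space M. 0 \<le> \<pi> t \<omega> \<and> \<pi> t \<omega> \<le> 1)"

definition power_utility :: "real \<Rightarrow> real \<Rightarrow> real" where
  "power_utility \<alpha> x = - (x powr \<alpha>)"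

end

theory Submission
  imports Defs
begin

(* For alpha < 0 the utility bound says E[V_t^alpha] <= K e^(-ct),
   i.e. a negative moment of the (strictly positive) wealth decays geometrically.
   Markov's inequality applied to V^alpha turns a negative moment into a lower-tail
   estimate:  P(V >= v) >= 1 - E[V^alpha] / v^alpha  for every level v > 0.
   Choosing the level v = e^(bt) with alpha*b = -c/2 gives
   P(V_t >= e^(bt)) >= 1 - K e^(-ct/2), and K e^(-ct/2) <= e^(-ct/4) for large t. *)

text \<open>Wealth stays strictly positive: each factor \<open>(1 - \<pi>) + \<pi> S_t / S_{t-1}\<close> is a
  convex combination of \<open>1\<close> and a positive price ratio.\<close>
lemma wealth_pos:
  assumes "V0 > 0" "trading_strategy M X \<pi>" "\<omega> \<in> space M"
  shows "wealth V0 X \<pi> t \<omega> > 0"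
proof (induction t)
  case 0 then show ?case using assms by simp
next
  case (Suc t)
  have p: "0 \<le> \<pi> (Suc t) \<omega>" "\<pi> (Suc t) \<omega> \<le> 1"
    using assms(2,3) unfolding trading_strategy_def by auto
  have ratio: "price X (Suc t) \<omega> / price X t \<omega> > 0" by (simp add: price_def)
  have "(1 - \<pi> (Suc t) \<omega>) + \<pi> (Suc t) \<omega> * (price X (Suc t) \<omega> / price X t \<omega>) > 0"
  proof (cases "\<pi> (Suc t) \<omega> = 1")
    case True then show ?thesis using ratio by simp
  next
    case False
    then show ?thesis using p ratio by (smt (verit) mult_nonneg_nonneg)
  qed
  then show ?case using Suc by simp
qed

text \<open>Lower-tail estimate through a negative moment: for a positive random variable
  \<open>V\<close> and \<open>\<alpha> < 0\<close>, Markov's inequality for \<open>V powr \<alpha>\<close> bounds the probability that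
  \<open>V\<close> falls below a level \<open>v\<close>.\<close>
lemma (in prob_space) prob_ge_by_negative_moment:
  assumes "\<alpha> < 0" and "v > 0"
    and pos: "\<And>\<omega>. \<omega> \<in> space M \<Longrightarrow> V \<omega> > 0"
    and int: "integrable M (\<lambda>\<omega>. V \<omega> powr \<alpha>)"
  shows "prob {\<omega> \<in> space M. V \<omega> \<ge> v} \<ge> 1 - expectation (\<lambda>\<omega>. V \<omega> powr \<alpha>) / v powr \<alpha>"
proof -
  let ?g = "\<lambda>\<omega>. V \<omega> powr \<alpha>" and ?s = "v powr \<alpha>"
  have s_pos: "?s > 0" using \<open>v > 0\<close> by simp
  have markov: "prob {\<omega> \<in> space M. ?g \<omega> \<ge> ?s} \<le> expectation ?g / ?s"
    by (rule integral_Markov_inequality_measure[OF int, where A="space M"]) (use \<open>v > 0\<close> in \<open>auto simp: s_pos\<close>)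
  have g_meas: "?g \<in> borel_measurable M" using int by auto
  text \<open>Since \<open>x \<mapsto> x powr \<alpha>\<close> is decreasing on positive reals, the event
    \<open>V \<ge> v\<close> is exactly the event \<open>V powr \<alpha> \<le> v powr \<alpha>\<close>.\<close>
  have tail_as_moment: "{\<omega> \<in> space M. V \<omega> \<ge> v} = {\<omega> \<in> space M. ?g \<omega> \<le> ?s}"
  proof (intro Collect_cong conj_cong refl)
    fix \<omega> assume "\<omega> \<in> space M"
    then show "(V \<omega> \<ge> v) = (?g \<omega> \<le> ?s)"
      using pos \<open>\<alpha> < 0\<close> \<open>v > 0\<close>
      by (metis linorder_not_le order_less_imp_le powr_less_mono2_neg powr_mono2')
  qed
  have "1 - expectation ?g / ?s \<le> 1 - prob {\<omega> \<in> space M. ?g \<omega> \<ge> ?s}"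
    using markov by linarith
  also have "\<dots> = prob {\<omega> \<in> space M. ?g \<omega> < ?s}"
  proof -
    have "{\<omega> \<in> space M. ?g \<omega> \<ge> ?s} \<in> events" using g_meas by measurable
    moreover have "space M - {\<omega> \<in> space M. ?g \<omega> \<ge> ?s} = {\<omega> \<in> space M. ?g \<omega> < ?s}" by auto
    ultimately show ?thesis by (metis prob_compl)
  qed
  also have "\<dots> \<le> prob {\<omega> \<in> space M. ?g \<omega> \<le> ?s}"
    using g_meas by (intro finite_measure_mono) auto
  finally show ?thesis unfolding tail_as_moment .
qed

lemma eventually_const_mult_exp_le:
  assumes "c > 0"
  shows "\<forall>\<^sub>F t in sequentially. K * exp (- c * real t) \<le> exp (- (c / 2) * real t)"
  using assms by real_asymp

theorem theoremt3p5:
  fixes M :: "'a measure" and X \<pi> :: "nat \<Rightarrow> 'a \<Rightarrow> real" and V0 \<alpha> :: real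
  assumes "prob_space M"
    and "\<And>t. X t \<in> borel_measurable M"
    and "V0 > 0"
    and "\<alpha> < 0"
    and "trading_strategy M X \<pi>"
    and "\<exists>c K. c > 0 \<and> K > 0 \<and> (\<forall>\<^sub>F t in sequentially.
            integrable M (\<lambda>\<omega>. power_utility \<alpha> (wealth V0 X \<pi> t \<omega>)) \<and>
            \<bar>prob_space.expectation M (\<lambda>\<omega>. power_utility \<alpha> (wealth V0 X \<pi> t \<omega>))\<bar>
              \<le> K * exp (- c * real t))"
  shows "\<exists>b c'. b > 0 \<and> c' > 0 \<and> (\<forall>\<^sub>F t in sequentially.
            measure M {\<omega> \<in> space M. wealth V0 X \<pi> t \<omega> \<ge> exp (b * real t)}
              \<ge> 1 - exp (- c' * real t))"
proof -
  interpret P: prob_space M by fact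
  obtain c K where "c > 0" "K > 0" and utility_bound: "\<forall>\<^sub>F t in sequentially.
            integrable M (\<lambda>\<omega>. power_utility \<alpha> (wealth V0 X \<pi> t \<omega>)) \<and>
            \<bar>P.expectation (\<lambda>\<omega>. power_utility \<alpha> (wealth V0 X \<pi> t \<omega>))\<bar>
              \<le> K * exp (- c * real t)" using assms(6) by blast
  define b where "b = c / (-2 * \<alpha>)"
  have "b > 0" using \<open>c > 0\<close> \<open>\<alpha> < 0\<close> by (simp add: b_def divide_pos_neg)
  have level: "exp (b * real t) powr \<alpha> = exp (- (c / 2) * real t)" for t
    using \<open>\<alpha> < 0\<close> by (simp add: powr_def b_def field_simps)
  have absorb: "\<forall>\<^sub>F t in sequentially. K * exp (- (c / 2) * real t) \<le> exp (- (c / 4) * real t)"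
    using eventually_const_mult_exp_le[of "c / 2" K] \<open>c > 0\<close> by simp
  have "\<forall>\<^sub>F t in sequentially.
          measure M {\<omega> \<in> space M. wealth V0 X \<pi> t \<omega> \<ge> exp (b * real t)}
            \<ge> 1 - exp (- (c / 4) * real t)"
    using utility_bound absorb
  proof eventually_elim
    case (elim t)
    let ?V = "\<lambda>\<omega>. wealth V0 X \<pi> t \<omega>"
    let ?m = "P.expectation (\<lambda>\<omega>. ?V \<omega> powr \<alpha>)"
    have moment: "integrable M (\<lambda>\<omega>. ?V \<omega> powr \<alpha>)"
      using integrable_minus[OF elim(1)[THEN conjunct1]] by (simp add: power_utility_def)
    have "?m \<le> K * exp (- c * real t)"
      using elim(1) by (simp add: power_utility_def)
    then have "?m / exp (b * real t) powr \<alpha> \<le> K * exp (- c * real t) / exp (- (c / 2) * real t)"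
      by (simp add: level divide_right_mono)
    also have "\<dots> = K * exp (- (c / 2) * real t)"
      by (simp add: divide_simps flip: exp_add)
    finally have "?m / exp (b * real t) powr \<alpha> \<le> exp (- (c / 4) * real t)"
      using elim(2) by linarith
    moreover have "P.prob {\<omega> \<in> space M. ?V \<omega> \<ge> exp (b * real t)} \<ge> 1 - ?m / exp (b * real t) powr \<alpha>"
      by (rule P.prob_ge_by_negative_moment[OF \<open>\<alpha> < 0\<close> _ wealth_pos[OF assms(3,5)] moment]) simp
    ultimately show ?case by linarith
  qed
  then show ?thesis using \<open>b > 0\<close> \<open>c > 0\<close> by (intro exI[of _ b] exI[of _ "c / 4"]) auto
qed

end
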